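(* Let $D$ be a linear differential operator of second order that is elliptic at ${\bf z}$, and let ${\bf X}=\{{\bf x}_1,\dots,{\bf x}_N\}$ with ${\bf x}_1={\bf z}$. Then there is no positive numerical differentiation formula $Df({\bf z})\approx\sum_{j=1}^Nw_jf({\bf x}_j)$ that is exact of order $q$ for any $q\ge5$.
   Context: $\Pi^d_q$: real polynomials in $d$ variables of total degree $<q$. $Df=\sum_{|\alpha|\le2}c_\alpha\partial^\alpha f$ with real coefficient functions; $D$ is elliptic at ${\bf z}$ if $\sum_{|\alpha|=2}c_\alpha({\bf z})\xi^\alpha>0$ for all $\xi\in\mathbb{R}^d\setminus\{0\}$. ${\bf X}$ consists of distinct points. A formula with ${\bf x}_1={\bf z}$ is positive if $w_1<0$ and $w_j>0$ for $j=2,\dots,N$. It is exact of order $q$ if $Dp({\bf z})=\sum_jw_jp({\bf x}_j)$ for all $p\in\Pi^d_q$. *)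

theory Defs
  imports "HOL-Analysis.Analysis"
begin

text \<open>Points of R^d are vectors of type real^'n (d = CARD('n)).
  Multi-indices are functions 'n \<Rightarrow> nat; the order of a multi-index is its sum.\<close>

definition mi_order :: "('n::finite \<Rightarrow> nat) \<Rightarrow> nat" where
  "mi_order \<alpha> = sum \<alpha> UNIV"

definition monomial_mi :: "('n::finite \<Rightarrow> nat) \<Rightarrow> real^'n \<Rightarrow> real" where
  "monomial_mi \<alpha> x = (\<Prod>i\<in>UNIV. (x $ i) ^ \<alpha> i)"

definition poly_space :: "nat \<Rightarrow> (real^'n::finite \<Rightarrow> real) set" where
  "poly_space q = {p. \<exists>c :: ('n \<Rightarrow> nat) \<Rightarrow> real.
      p = (\<lambda>x. \<Sum>\<alpha>\<in>{\<alpha>. mi_order \<alpha> < q}. c \<alpha> * monomial_mi \<alpha> x)}"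

definition pdiff :: "'n::finite \<Rightarrow> (real^'n \<Rightarrow> real) \<Rightarrow> real^'n \<Rightarrow> real" where
  "pdiff i f x = deriv (\<lambda>t. f (x + t *\<^sub>R axis i 1)) 0"

text \<open>Higher partial derivative of multi-index alpha (coordinates processed in a fixed
  enumeration of the index type; the order is irrelevant for smooth functions).\<close>
definition coord_list :: "'n::finite list" where
  "coord_list = (SOME xs. distinct xs \<and> set xs = UNIV)"

definition pdiff_mi :: "('n::finite \<Rightarrow> nat) \<Rightarrow> (real^'n \<Rightarrow> real) \<Rightarrow> real^'n \<Rightarrow> real" where
  "pdiff_mi \<alpha> f = fold (\<lambda>i g. (pdiff i ^^ \<alpha> i) g) coord_list f"

definition diff_op :: "(('n::finite \<Rightarrow> nat) \<Rightarrow> real^'n \<Rightarrow> real) \<Rightarrow> (real^'n \<Rightarrow> real) \<Rightarrow> real^'n \<Rightarrow> real" where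
  "diff_op c f x = (\<Sum>\<alpha>\<in>{\<alpha>. mi_order \<alpha> \<le> 2}. c \<alpha> x * pdiff_mi \<alpha> f x)"

definition elliptic_at :: "(('n::finite \<Rightarrow> nat) \<Rightarrow> real^'n \<Rightarrow> real) \<Rightarrow> real^'n \<Rightarrow> bool" where
  "elliptic_at c z \<longleftrightarrow>
     (\<forall>\<xi>::real^'n. \<xi> \<noteq> 0 \<longrightarrow> (\<Sum>\<alpha>\<in>{\<alpha>. mi_order \<alpha> = 2}. c \<alpha> z * monomial_mi \<alpha> \<xi>) > 0)"

text \<open>Formula D f(z) ~ sum_{j=1..N} w_j f(x_j), with x_1 = z.\<close>
definition positive_formula :: "nat \<Rightarrow> (nat \<Rightarrow> real) \<Rightarrow> bool" where
  "positive_formula N w \<longleftrightarrow> w 1 < 0 \<and> (\<forall>j\<in>{2..N}. w j > 0)"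

definition exact_of_order ::
  "(('n::finite \<Rightarrow> nat) \<Rightarrow> real^'n \<Rightarrow> real) \<Rightarrow> real^'n \<Rightarrow> nat \<Rightarrow> (nat \<Rightarrow> real^'n) \<Rightarrow> (nat \<Rightarrow> real) \<Rightarrow> nat \<Rightarrow> bool" where
  "exact_of_order c z N X w q \<longleftrightarrow>
     (\<forall>p\<in>poly_space q. diff_op c p z = (\<Sum>j=1..N. w j * p (X j)))"

end

theory Submission
  imports Defs
begin

text \<open>
  Expand test polynomials around \<open>z\<close>. The derivative of order \<open>\<alpha>\<close> of \<open>(x - z)\<^sup>\<beta>\<close> vanishes
  at \<open>z\<close> unless \<open>\<beta> = \<alpha>\<close>, so \<open>D\<close> annihilates \<open>|x - z|\<^sup>4\<close> at \<open>z\<close>, while ellipticity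
  makes \<open>D |x - z|\<^sup>2\<close> positive there. Both lie in \<open>\<Pi>\<^sub>5\<close>. Exactness on \<open>|x - z|\<^sup>4\<close>
  gives \<open>\<Sum>\<^sub>j\<^sub>\<ge>\<^sub>2 w\<^sub>j |x\<^sub>j - z|\<^sup>4 = 0\<close>, impossible with positive \<open>w\<^sub>j\<close> unless \<open>z\<close> is the only node;
  but then exactness on \<open>|x - z|\<^sup>2\<close> reads \<open>0 < D |x - z|\<^sup>2 (z) = w\<^sub>1 \<cdot> 0\<close>.
\<close>

definition shifted_poly ::
  "real^'n::finite \<Rightarrow> 'k set \<Rightarrow> ('k \<Rightarrow> real) \<Rightarrow> ('k \<Rightarrow> 'n \<Rightarrow> nat) \<Rightarrow> real^'n \<Rightarrow> real" where
  "shifted_poly z K a b x = (\<Sum>k\<in>K. a k * (\<Prod>j\<in>UNIV. (x$j - z$j) ^ b k j))"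

lemma shifted_poly_cong:
  "(\<And>k. k \<in> K \<Longrightarrow> a k = a' k \<and> b k = b' k) \<Longrightarrow> shifted_poly z K a b = shifted_poly z K a' b'"
  unfolding shifted_poly_def by (intro ext sum.cong) auto

text \<open>Truncated subtraction makes \<open>falling_fact m n = 0\<close> for \<open>m < n\<close>.\<close>
definition falling_fact :: "nat \<Rightarrow> nat \<Rightarrow> real" where
  "falling_fact m n = (\<Prod>t<n. real (m - t))"

lemma falling_fact_eq_0: "m < n \<Longrightarrow> falling_fact m n = 0"
  unfolding falling_fact_def by (intro prod_zero) (auto intro!: bexI[of _ m])

lemma falling_fact_self: "falling_fact m m = fact m"
  unfolding falling_fact_def by (simp add: fact_prod_rev atLeast0LessThan)

definition mi_fact :: "('n::finite \<Rightarrow> nat) \<Rightarrow> real" where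
  "mi_fact \<alpha> = (\<Prod>i\<in>UNIV. fact (\<alpha> i))"

lemma mi_fact_pos: "mi_fact \<alpha> > 0"
  unfolding mi_fact_def by (intro prod_pos) auto

lemma has_real_derivative_shifted_monomial_along_axis:
  fixes x z :: "real^'n::finite"
  shows "((\<lambda>t. \<Prod>j\<in>UNIV. ((x + t *\<^sub>R axis i 1)$j - z$j) ^ b j) has_real_derivative
     (real (b i) * (x$i - z$i) ^ (b i - 1) * (\<Prod>j\<in>UNIV-{i}. (x$j - z$j) ^ b j))) (at 0)"
proof -
  have split_off_i: "(\<Prod>j\<in>UNIV. ((x + t *\<^sub>R axis i 1)$j - z$j) ^ b j)
      = (x$i + t - z$i) ^ b i * (\<Prod>j\<in>UNIV-{i}. (x$j - z$j) ^ b j)" for t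
    by (simp add: prod.remove[of UNIV i] axis_def)
  have "((\<lambda>t. (x$i + t - z$i) ^ b i * (\<Prod>j\<in>UNIV-{i}. (x$j - z$j) ^ b j)) has_real_derivative
     (real (b i) * (x$i + 0 - z$i) ^ (b i - 1) * 1 * (\<Prod>j\<in>UNIV-{i}. (x$j - z$j) ^ b j))) (at 0)"
    by (intro derivative_eq_intros) auto
  then show ?thesis unfolding split_off_i by simp
qed

lemma pdiff_shifted_poly:
  "pdiff i (shifted_poly z K a b)
     = shifted_poly z K (\<lambda>k. a k * real (b k i)) (\<lambda>k. (b k)(i := b k i - 1))"
proof
  fix x
  let ?d = "\<lambda>k. real (b k i) * (x$i - z$i) ^ (b k i - 1) * (\<Prod>j\<in>UNIV-{i}. (x$j - z$j) ^ b k j)"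
  have "((\<lambda>t. shifted_poly z K a b (x + t *\<^sub>R axis i 1)) has_real_derivative (\<Sum>k\<in>K. a k * ?d k)) (at 0)"
    unfolding shifted_poly_def
    by (intro DERIV_sum DERIV_cmult has_real_derivative_shifted_monomial_along_axis)
  then have "pdiff i (shifted_poly z K a b) x = (\<Sum>k\<in>K. a k * ?d k)"
    unfolding pdiff_def by (rule DERIV_imp_deriv)
  also have "\<dots> = shifted_poly z K (\<lambda>k. a k * real (b k i)) (\<lambda>k. (b k)(i := b k i - 1)) x"
    unfolding shifted_poly_def by (intro sum.cong refl) (simp add: prod.remove[of UNIV i])
  finally show "pdiff i (shifted_poly z K a b) x = \<dots>" .
qed

lemma pdiff_power_shifted_poly:
  "(pdiff i ^^ n) (shifted_poly z K a b)
     = shifted_poly z K (\<lambda>k. a k * falling_fact (b k i) n) (\<lambda>k. (b k)(i := b k i - n))"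
proof (induction n)
  case 0
  show ?case by (simp add: falling_fact_def)
next
  case (Suc n)
  have "(pdiff i ^^ Suc n) (shifted_poly z K a b)
      = shifted_poly z K (\<lambda>k. a k * falling_fact (b k i) n * real (b k i - n))
          (\<lambda>k. ((b k)(i := b k i - n))(i := b k i - n - 1))"
    by (simp only: funpow.simps o_apply Suc.IH pdiff_shifted_poly) simp
  also have "\<dots> = shifted_poly z K (\<lambda>k. a k * falling_fact (b k i) (Suc n)) (\<lambda>k. (b k)(i := b k i - Suc n))"
    by (intro shifted_poly_cong conjI) (simp_all add: falling_fact_def)
  finally show ?case .
qed

lemma fold_pdiff_power_shifted_poly:
  assumes "distinct xs"
  shows "fold (\<lambda>i g. (pdiff i ^^ \<alpha> i) g) xs (shifted_poly z K a b)
   = shifted_poly z K (\<lambda>k. a k * (\<Prod>i\<in>set xs. falling_fact (b k i) (\<alpha> i)))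
       (\<lambda>k j. if j \<in> set xs then b k j - \<alpha> j else b k j)"
  using assms
proof (induction xs arbitrary: a b)
  case Nil
  show ?case by simp
next
  case (Cons i xs)
  then have i_new: "i \<notin> set xs" and "distinct xs" by auto
  let ?b' = "\<lambda>k. (b k)(i := b k i - \<alpha> i)"
  have "fold (\<lambda>i g. (pdiff i ^^ \<alpha> i) g) (i # xs) (shifted_poly z K a b)
     = fold (\<lambda>i g. (pdiff i ^^ \<alpha> i) g) xs (shifted_poly z K (\<lambda>k. a k * falling_fact (b k i) (\<alpha> i)) ?b')"
    by (simp add: pdiff_power_shifted_poly)
  also have "\<dots> = shifted_poly z K
      (\<lambda>k. a k * falling_fact (b k i) (\<alpha> i) * (\<Prod>i'\<in>set xs. falling_fact (?b' k i') (\<alpha> i')))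
      (\<lambda>k j. if j \<in> set xs then ?b' k j - \<alpha> j else ?b' k j)"
    using Cons.IH \<open>distinct xs\<close> .
  also have "\<dots> = shifted_poly z K (\<lambda>k. a k * (\<Prod>i\<in>set (i # xs). falling_fact (b k i) (\<alpha> i)))
      (\<lambda>k j. if j \<in> set (i # xs) then b k j - \<alpha> j else b k j)"
  proof (intro shifted_poly_cong conjI)
    fix k
    have "(\<Prod>i'\<in>set xs. falling_fact (?b' k i') (\<alpha> i')) = (\<Prod>i'\<in>set xs. falling_fact (b k i') (\<alpha> i'))"
      using i_new by (intro prod.cong) auto
    then show "a k * falling_fact (b k i) (\<alpha> i) * (\<Prod>i'\<in>set xs. falling_fact (?b' k i') (\<alpha> i'))
        = a k * (\<Prod>i\<in>set (i # xs). falling_fact (b k i) (\<alpha> i))"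
      using i_new by simp
    show "(\<lambda>j. if j \<in> set xs then ?b' k j - \<alpha> j else ?b' k j)
        = (\<lambda>j. if j \<in> set (i # xs) then b k j - \<alpha> j else b k j)"
      using i_new by auto
  qed
  finally show ?case .
qed

lemma coord_list_enumerates_UNIV: "distinct (coord_list :: 'n::finite list)" "set (coord_list :: 'n list) = UNIV"
proof -
  have "\<exists>xs. distinct xs \<and> set xs = (UNIV :: 'n set)"
    using finite_distinct_list[OF finite_class.finite_UNIV] by blast
  then show "distinct (coord_list :: 'n list)" "set (coord_list :: 'n list) = UNIV"
    unfolding coord_list_def by (metis (mono_tags, lifting) someI_ex)+
qed

lemma pdiff_mi_shifted_poly:
  "pdiff_mi \<alpha> (shifted_poly z K a b)
     = shifted_poly z K (\<lambda>k. a k * (\<Prod>i\<in>UNIV. falling_fact (b k i) (\<alpha> i))) (\<lambda>k j. b k j - \<alpha> j)"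
  unfolding pdiff_mi_def by (simp add: fold_pdiff_power_shifted_poly coord_list_enumerates_UNIV)

lemma prod_zero_power:
  "(\<Prod>j\<in>(UNIV::'n::finite set). (0::real) ^ n j) = (if n = (\<lambda>_. 0) then 1 else 0)"
proof (cases "n = (\<lambda>_. 0)")
  case False
  then obtain j where "n j \<noteq> 0" by auto
  then show ?thesis using False by (intro trans[OF prod_zero]) auto
qed simp

lemma pdiff_mi_shifted_poly_at_centre:
  "pdiff_mi \<alpha> (shifted_poly z K a b) z = (\<Sum>k\<in>K. if b k = \<alpha> then a k * mi_fact \<alpha> else 0)"
  unfolding pdiff_mi_shifted_poly shifted_poly_def
proof (intro sum.cong refl)
  fix k
  show "a k * (\<Prod>i\<in>UNIV. falling_fact (b k i) (\<alpha> i)) * (\<Prod>j\<in>UNIV. (z$j - z$j) ^ (b k j - \<alpha> j))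
      = (if b k = \<alpha> then a k * mi_fact \<alpha> else 0)"
  proof (cases "b k = \<alpha>")
    case True
    then show ?thesis by (simp add: mi_fact_def falling_fact_self)
  next
    case False
    show ?thesis
    proof (cases "\<forall>j. b k j \<le> \<alpha> j")
      case True
      with False obtain i where "b k i < \<alpha> i" by (metis le_neq_implies_less ext)
      then have "(\<Prod>i\<in>UNIV. falling_fact (b k i) (\<alpha> i)) = 0"
        by (intro prod_zero) (auto intro!: bexI[of _ i] falling_fact_eq_0)
      then show ?thesis using False by simp
    next
      case not_below: False
      then have "(\<lambda>j. b k j - \<alpha> j) \<noteq> (\<lambda>_. 0)" by (metis diff_is_0_eq)
      then show ?thesis using False prod_zero_power[of "\<lambda>j. b k j - \<alpha> j"] by simp
    qed
  qed
qed

lemma finite_mi_order_less: "finite {\<alpha>::'n::finite \<Rightarrow> nat. mi_order \<alpha> < q}"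
proof (rule finite_subset)
  show "{\<alpha>::'n \<Rightarrow> nat. mi_order \<alpha> < q} \<subseteq> PiE UNIV (\<lambda>_. {..<q})"
  proof
    fix \<alpha> :: "'n \<Rightarrow> nat" assume "\<alpha> \<in> {\<alpha>. mi_order \<alpha> < q}"
    moreover have "\<alpha> i \<le> mi_order \<alpha>" for i
      unfolding mi_order_def by (rule member_le_sum) auto
    ultimately show "\<alpha> \<in> PiE UNIV (\<lambda>_. {..<q})"
      by (auto simp: PiE_UNIV_domain intro: le_less_trans)
  qed
qed (intro finite_PiE; simp)

lemma diff_op_shifted_poly_at_centre:
  fixes c :: "('n::finite \<Rightarrow> nat) \<Rightarrow> real^'n \<Rightarrow> real"
  assumes "finite K"
  shows "diff_op c (shifted_poly z K a b) z
    = (\<Sum>k\<in>K. if mi_order (b k) \<le> 2 then a k * c (b k) z * mi_fact (b k) else 0)"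
proof -
  let ?A = "{\<alpha>::'n \<Rightarrow> nat. mi_order \<alpha> \<le> 2}"
  have "?A = {\<alpha>. mi_order \<alpha> < 3}"
    by auto
  then have "finite ?A"
    using finite_mi_order_less by simp
  have "diff_op c (shifted_poly z K a b) z
      = (\<Sum>\<alpha>\<in>?A. \<Sum>k\<in>K. if b k = \<alpha> then a k * c \<alpha> z * mi_fact \<alpha> else 0)"
    unfolding diff_op_def pdiff_mi_shifted_poly_at_centre sum_distrib_left
    by (intro sum.cong refl) auto
  also have "\<dots> = (\<Sum>k\<in>K. \<Sum>\<alpha>\<in>?A. if \<alpha> = b k then a k * c \<alpha> z * mi_fact \<alpha> else 0)"
    by (subst sum.swap) (intro sum.cong refl, auto)
  also have "\<dots> = (\<Sum>k\<in>K. if mi_order (b k) \<le> 2 then a k * c (b k) z * mi_fact (b k) else 0)"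
    using \<open>finite ?A\<close> by (intro sum.cong refl) simp
  finally show ?thesis .
qed

lemma poly_space_sum_monomials:
  assumes "finite K" "\<And>k. k \<in> K \<Longrightarrow> mi_order (m k) < q"
  shows "(\<lambda>x. \<Sum>k\<in>K. e k * monomial_mi (m k) x) \<in> (poly_space q :: (real^'n::finite \<Rightarrow> real) set)"
proof -
  let ?S = "{\<alpha>::'n \<Rightarrow> nat. mi_order \<alpha> < q}"
  define c where "c \<gamma> = (\<Sum>k\<in>{k\<in>K. m k = \<gamma>}. e k)" for \<gamma>
  have "(\<Sum>k\<in>K. e k * monomial_mi (m k) x) = (\<Sum>\<alpha>\<in>?S. c \<alpha> * monomial_mi \<alpha> x)" for x :: "real^'n"
  proof -
    have "(\<Sum>\<alpha>\<in>?S. c \<alpha> * monomial_mi \<alpha> x) = (\<Sum>\<alpha>\<in>?S. \<Sum>k\<in>{k\<in>K. m k = \<alpha>}. e k * monomial_mi (m k) x)"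
      unfolding c_def sum_distrib_right by (intro sum.cong refl) auto
    also have "\<dots> = (\<Sum>k\<in>K. e k * monomial_mi (m k) x)"
      by (rule sum.group) (use assms finite_mi_order_less in auto)
    finally show ?thesis by simp
  qed
  then show ?thesis unfolding poly_space_def by blast
qed

lemma poly_space_mono:
  assumes "q \<le> q'" "p \<in> poly_space q"
  shows "p \<in> (poly_space q' :: (real^'n::finite \<Rightarrow> real) set)"
proof -
  obtain c where "p = (\<lambda>x. \<Sum>\<alpha>\<in>{\<alpha>::'n \<Rightarrow> nat. mi_order \<alpha> < q}. c \<alpha> * monomial_mi \<alpha> x)"
    using assms(2) unfolding poly_space_def by blast
  then show ?thesis
    using poly_space_sum_monomials[of "{\<alpha>::'n \<Rightarrow> nat. mi_order \<alpha> < q}" "\<lambda>\<alpha>. \<alpha>" q' c]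
      finite_mi_order_less assms(1) by auto
qed

lemma poly_space_const: "(\<lambda>x. e) \<in> (poly_space (Suc 0) :: (real^'n::finite \<Rightarrow> real) set)"
  using poly_space_sum_monomials[of "{()}" "\<lambda>_. \<lambda>_. 0" 1 "\<lambda>_. e"]
  by (simp add: mi_order_def monomial_mi_def)

lemma poly_space_add:
  assumes "p \<in> poly_space q" "r \<in> poly_space q"
  shows "(\<lambda>x. p x + r x) \<in> (poly_space q :: (real^'n::finite \<Rightarrow> real) set)"
proof -
  let ?A = "{\<alpha>::'n \<Rightarrow> nat. mi_order \<alpha> < q}"
  obtain c d where "p = (\<lambda>x. \<Sum>\<alpha>\<in>?A. c \<alpha> * monomial_mi \<alpha> x)" "r = (\<lambda>x. \<Sum>\<alpha>\<in>?A. d \<alpha> * monomial_mi \<alpha> x)"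
    using assms unfolding poly_space_def by blast
  then have "(\<lambda>x. p x + r x) = (\<lambda>x. \<Sum>\<alpha>\<in>?A. (c \<alpha> + d \<alpha>) * monomial_mi \<alpha> x)"
    by (simp add: sum.distrib distrib_right)
  then show ?thesis unfolding poly_space_def by (intro CollectI exI)
qed

lemma poly_space_sum:
  assumes "finite I" "\<And>i. i \<in> I \<Longrightarrow> f i \<in> poly_space q"
  shows "(\<lambda>x. \<Sum>i\<in>I. f i x) \<in> (poly_space q :: (real^'n::finite \<Rightarrow> real) set)"
  using assms
proof (induction I rule: finite_induct)
  case empty
  then show ?case using poly_space_sum_monomials[of "{}"] by simp
next
  case (insert i I)
  then show ?case using poly_space_add[of "f i" q "\<lambda>x. \<Sum>i\<in>I. f i x"] by simp
qed

lemma poly_space_mult: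
  assumes "p \<in> poly_space (Suc m)" "r \<in> poly_space (Suc n)"
  shows "(\<lambda>x. p x * r x) \<in> (poly_space (Suc (m + n)) :: (real^'n::finite \<Rightarrow> real) set)"
proof -
  let ?A = "{\<alpha>::'n \<Rightarrow> nat. mi_order \<alpha> < Suc m}" and ?B = "{\<alpha>::'n \<Rightarrow> nat. mi_order \<alpha> < Suc n}"
  obtain c d where p: "p = (\<lambda>x. \<Sum>\<alpha>\<in>?A. c \<alpha> * monomial_mi \<alpha> x)"
    and r: "r = (\<lambda>x. \<Sum>\<alpha>\<in>?B. d \<alpha> * monomial_mi \<alpha> x)"
    using assms unfolding poly_space_def by blast
  have monomial_mi_add: "monomial_mi (\<lambda>i. \<alpha> i + \<beta> i) x = monomial_mi \<alpha> x * monomial_mi \<beta> x"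
    for \<alpha> \<beta> :: "'n \<Rightarrow> nat" and x :: "real^'n"
    unfolding monomial_mi_def by (simp add: power_add prod.distrib)
  have "(\<lambda>x. p x * r x)
      = (\<lambda>x. \<Sum>k\<in>?A \<times> ?B. (c (fst k) * d (snd k)) * monomial_mi (\<lambda>i. fst k i + snd k i) x)"
    unfolding p r sum_product sum.cartesian_product monomial_mi_add
    by (intro ext sum.cong refl) (auto simp: algebra_simps)
  also have "\<dots> \<in> poly_space (Suc (m + n))"
    by (rule poly_space_sum_monomials)
      (use finite_mi_order_less in \<open>auto simp: mi_order_def sum.distrib\<close>)
  finally show ?thesis .
qed

lemma poly_space_prod:
  assumes "finite I" "\<And>i. i \<in> I \<Longrightarrow> f i \<in> poly_space (Suc (d i))"
  shows "(\<lambda>x. \<Prod>i\<in>I. f i x) \<in> (poly_space (Suc (\<Sum>i\<in>I. d i)) :: (real^'n::finite \<Rightarrow> real) set)"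
  using assms
proof (induction I rule: finite_induct)
  case empty
  then show ?case using poly_space_const[of 1] by simp
next
  case (insert i I)
  then show ?case using poly_space_mult[of "f i" "d i" "\<lambda>x. \<Prod>i\<in>I. f i x"] by simp
qed

lemma poly_space_coord_shift: "(\<lambda>x. x$i - z$i) \<in> (poly_space 2 :: (real^'n::finite \<Rightarrow> real) set)"
proof -
  define m :: "bool \<Rightarrow> 'n \<Rightarrow> nat"
    where "m b = (if b then (\<lambda>j. if j = i then 1 else 0) else (\<lambda>_. 0))" for b
  define e :: "bool \<Rightarrow> real" where "e b = (if b then 1 else - z$i)" for b
  have "monomial_mi (m True) x = x$i" for x :: "real^'n"
  proof -
    have "(\<Prod>j\<in>UNIV. x$j ^ (if j = i then 1 else 0)) = (\<Prod>j\<in>UNIV. if j = i then x$i else 1)"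
      by (rule prod.cong) auto
    then show ?thesis unfolding monomial_mi_def m_def by simp
  qed
  then have "(\<lambda>x. x$i - z$i) = (\<lambda>x. \<Sum>b\<in>UNIV. e b * monomial_mi (m b) x)"
    by (auto simp: UNIV_bool e_def m_def monomial_mi_def[of "\<lambda>_. 0"])
  also have "\<dots> \<in> poly_space 2"
    by (rule poly_space_sum_monomials) (auto simp: m_def mi_order_def)
  finally show ?thesis .
qed

lemma poly_space_shifted_poly:
  fixes z :: "real^'n::finite"
  assumes "finite K" "\<And>k. k \<in> K \<Longrightarrow> mi_order (b k) < q"
  shows "shifted_poly z K a b \<in> poly_space q"
proof -
  have term_in: "(\<lambda>x. a k * (\<Prod>j\<in>UNIV. (x$j - z$j) ^ b k j)) \<in> poly_space q" if "k \<in> K" for k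
  proof -
    have "(\<lambda>x. (x$j - z$j) ^ n) \<in> (poly_space (Suc n) :: (real^'n \<Rightarrow> real) set)" for j n
    proof -
      have "(\<lambda>x. x$j - z$j) \<in> (poly_space (Suc 1) :: (real^'n \<Rightarrow> real) set)"
        using poly_space_coord_shift by (simp add: numeral_2_eq_2)
      then show ?thesis
        using poly_space_prod[of "{..<n}" "\<lambda>_ x. x$j - z$j" "\<lambda>_. 1"] by simp
    qed
    then have "(\<lambda>x. \<Prod>j\<in>UNIV. (x$j - z$j) ^ b k j) \<in> poly_space (Suc (mi_order (b k)))"
      using poly_space_prod[of UNIV "\<lambda>j x. (x$j - z$j) ^ b k j" "b k"] by (simp add: mi_order_def)
    then have "(\<lambda>x. a k * (\<Prod>j\<in>UNIV. (x$j - z$j) ^ b k j)) \<in> poly_space (Suc (mi_order (b k)))"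
      using poly_space_mult[OF poly_space_const[of "a k"]] by simp
    then show ?thesis
      using assms(2)[OF that] by (elim poly_space_mono[rotated]) simp
  qed
  show ?thesis
    unfolding shifted_poly_def by (rule poly_space_sum[OF assms(1) term_in])
qed

definition sq_index :: "'n::finite \<Rightarrow> 'n \<Rightarrow> nat" where
  "sq_index k = (\<lambda>j. if j = k then 2 else 0)"

lemma mi_order_add: "mi_order (\<lambda>i. \<alpha> i + \<beta> i) = mi_order \<alpha> + mi_order \<beta>"
  unfolding mi_order_def by (simp add: sum.distrib)

lemma mi_order_sq_index: "mi_order (sq_index k :: 'n::finite \<Rightarrow> nat) = 2"
  unfolding mi_order_def sq_index_def by simp

lemma prod_power_sq_index: "(\<Prod>j\<in>UNIV. (y j :: real) ^ sq_index k j) = y k ^ 2"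
proof -
  have "(\<Prod>j\<in>UNIV. y j ^ sq_index k j) = (\<Prod>j\<in>UNIV. if j = k then y k ^ 2 else 1)"
    by (rule prod.cong) (auto simp: sq_index_def)
  then show ?thesis by simp
qed

lemma monomial_mi_axis:
  fixes \<alpha> :: "'n::finite \<Rightarrow> nat"
  assumes "mi_order \<alpha> = 2"
  shows "monomial_mi \<alpha> (axis k 1 :: real^'n) = (if \<alpha> = sq_index k then 1 else 0)"
proof (cases "\<exists>j. j \<noteq> k \<and> \<alpha> j \<noteq> 0")
  case True
  then obtain j where "j \<noteq> k" "\<alpha> j \<noteq> 0" by auto
  then show ?thesis
    unfolding monomial_mi_def sq_index_def
    by (auto simp: axis_def intro!: prod_zero bexI[of _ j] dest!: fun_cong[of _ _ j])
next
  case False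
  then have "sum \<alpha> (UNIV - {k}) = 0"
    by (intro sum.neutral) auto
  then have "\<alpha> k = 2"
    using assms unfolding mi_order_def by (simp add: sum.remove[of UNIV k])
  then have "\<alpha> = sq_index k"
    unfolding sq_index_def using False by (intro ext) auto
  then show ?thesis
    by (simp add: monomial_mi_def prod_power_sq_index)
qed

text \<open>Ellipticity tested on \<open>\<xi> = e\<^sub>k\<close> picks out the diagonal coefficient of \<open>\<partial>\<^sub>k\<^sup>2\<close>.\<close>
lemma elliptic_at_imp_diagonal_pos:
  fixes c :: "('n::finite \<Rightarrow> nat) \<Rightarrow> real^'n \<Rightarrow> real"
  assumes "elliptic_at c z"
  shows "c (sq_index k) z > 0"
proof -
  have "finite {\<alpha>::'n \<Rightarrow> nat. mi_order \<alpha> = 2}"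
    by (rule finite_subset[OF _ finite_mi_order_less[of 3]]) auto
  have "axis k 1 \<noteq> (0 :: real^'n)"
    by (simp add: axis_nth vec_eq_iff exI[of _ k])
  then have "0 < (\<Sum>\<alpha>\<in>{\<alpha>. mi_order \<alpha> = 2}. c \<alpha> z * monomial_mi \<alpha> (axis k 1 :: real^'n))"
    using assms unfolding elliptic_at_def by blast
  also have "\<dots> = (\<Sum>\<alpha>\<in>{\<alpha>. mi_order \<alpha> = 2}. if \<alpha> = sq_index k then c \<alpha> z else 0)"
    by (intro sum.cong refl) (simp add: monomial_mi_axis)
  also have "\<dots> = c (sq_index k) z"
    using \<open>finite {\<alpha>. mi_order \<alpha> = 2}\<close> by (simp add: mi_order_sq_index)
  finally show ?thesis .
qed

definition dist_sq_poly :: "real^'n::finite \<Rightarrow> real^'n \<Rightarrow> real" where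
  "dist_sq_poly z = shifted_poly z UNIV (\<lambda>_. 1) sq_index"

definition dist_pow4_poly :: "real^'n::finite \<Rightarrow> real^'n \<Rightarrow> real" where
  "dist_pow4_poly z = shifted_poly z (UNIV \<times> UNIV) (\<lambda>_. 1) (\<lambda>(k, l) j. sq_index k j + sq_index l j)"

lemma dist_sq_poly_eq: "dist_sq_poly z x = dist x z ^ 2"
proof -
  have "dist_sq_poly z x = (\<Sum>k\<in>UNIV. (x$k - z$k) * (x$k - z$k))"
    unfolding dist_sq_poly_def shifted_poly_def by (simp add: prod_power_sq_index power2_eq_square)
  also have "\<dots> = dist x z ^ 2"
    unfolding dist_norm power2_norm_eq_inner inner_vec_def by simp
  finally show ?thesis .
qed

lemma dist_pow4_poly_eq: "dist_pow4_poly z x = dist x z ^ 4"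
proof -
  have "dist_pow4_poly z x = (\<Sum>(k, l)\<in>UNIV \<times> UNIV. (x$k - z$k)^2 * (x$l - z$l)^2)"
    unfolding dist_pow4_poly_def shifted_poly_def
    by (intro sum.cong refl) (auto simp: power_add prod.distrib prod_power_sq_index)
  also have "\<dots> = dist_sq_poly z x ^ 2"
    unfolding dist_sq_poly_def shifted_poly_def
    by (simp add: prod_power_sq_index power2_eq_square sum_product sum.cartesian_product case_prod_beta)
  finally show ?thesis by (simp add: dist_sq_poly_eq)
qed

lemma dist_sq_poly_in_poly_space: "dist_sq_poly z \<in> poly_space 3"
  unfolding dist_sq_poly_def by (rule poly_space_shifted_poly) (auto simp: mi_order_sq_index)

lemma dist_pow4_poly_in_poly_space: "dist_pow4_poly z \<in> poly_space 5"
  unfolding dist_pow4_poly_def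
  by (rule poly_space_shifted_poly) (auto simp: mi_order_add mi_order_sq_index)

lemma diff_op_dist_sq_poly_pos:
  assumes "elliptic_at c z"
  shows "diff_op c (dist_sq_poly z) z > 0"
  unfolding dist_sq_poly_def diff_op_shifted_poly_at_centre[OF finite_class.finite_UNIV]
  by (intro sum_pos) (auto simp: mi_order_sq_index intro: mult_pos_pos mi_fact_pos
      elliptic_at_imp_diagonal_pos[OF assms])

lemma diff_op_dist_pow4_poly: "diff_op c (dist_pow4_poly z) z = 0"
  unfolding dist_pow4_poly_def
  by (simp add: diff_op_shifted_poly_at_centre case_prod_beta mi_order_add mi_order_sq_index)

theorem mainTheorem13:
  fixes c :: "('n::finite \<Rightarrow> nat) \<Rightarrow> real^'n \<Rightarrow> real"
    and z :: "real^'n" and X :: "nat \<Rightarrow> real^'n" and w :: "nat \<Rightarrow> real"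
    and N q :: nat
  assumes "elliptic_at c z"
    and "N \<ge> 1"
    and "inj_on X {1..N}"
    and "X 1 = z"
    and "q \<ge> 5"
  shows "\<not> (positive_formula N w \<and> exact_of_order c z N X w q)"
proof
  assume "positive_formula N w \<and> exact_of_order c z N X w q"
  then have w_pos: "\<And>j. j \<in> {2..N} \<Longrightarrow> w j > 0"
    and exact_q: "\<And>p. p \<in> poly_space q \<Longrightarrow> diff_op c p z = (\<Sum>j=1..N. w j * p (X j))"
    by (auto simp: positive_formula_def exact_of_order_def)
  have "{1..N} = insert 1 {2..N}"
    using assms(2) by auto
  then have exact: "diff_op c p z = w 1 * p z + (\<Sum>j=2..N. w j * p (X j))" if "p \<in> poly_space 5" for p
    using exact_q[OF poly_space_mono[OF assms(5) that]] assms(4) by simp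
  have "(\<Sum>j=2..N. w j * dist_pow4_poly z (X j)) = 0"
    using exact[OF dist_pow4_poly_in_poly_space[of z]] by (simp add: diff_op_dist_pow4_poly dist_pow4_poly_eq)
  moreover have "w j * dist_pow4_poly z (X j) > 0" if "j \<in> {2..N}" for j
  proof -
    have "X j \<noteq> X 1"
      using that assms(2) by (intro inj_on_contraD[OF assms(3)]) auto
    then show ?thesis
      using w_pos[OF that] assms(4) by (simp add: dist_pow4_poly_eq)
  qed
  ultimately have "{2..N} = {}"
    using sum_pos[of "{2..N}" "\<lambda>j. w j * dist_pow4_poly z (X j)"] by fastforce
  then have "diff_op c (dist_sq_poly z) z = 0"
    using exact[OF poly_space_mono[OF _ dist_sq_poly_in_poly_space]] by (simp add: dist_sq_poly_eq)
  then show False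
    using diff_op_dist_sq_poly_pos[OF assms(1)] by simp
qed

end
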